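(* Let $\psi$ be an injective map from the positive integers to the positive integers and let $A=\{\psi(n): n\ge 1\}$. For every nonnegative integer $n$, \[ \bar{p}^{A}_{1}(n)=\sum_{(N_0,N_1,N_2,\dots)}\ \prod_{j\ge0}\bar{p}^{A}(N_j), \] where the sum runs over all sequences $(N_0,N_1,\dots)$ of nonnegative integers with $n=\sum_{i\ge0}2^{i}N_i$.
   Context: For a set $A$ of positive integers: $\bar{p}^{A}(n)=E^{A}(n)-O^{A}(n)$, where $E^{A}(n)$ (resp. $O^{A}(n)$) is the number of partitions of $n$ into parts from $A$ (no restriction on multiplicities) with an even (resp. odd) number of parts, and $\bar{p}^{A}(0)=1$. For a positive integer $\alpha$, $\bar{p}^{A}_{\alpha}(n)=E^{A}_{\alpha}(n)-O^{A}_{\alpha}(n)$, where $E^{A}_{\alpha}(n)$ (resp. $O^{A}_{\alpha}(n)$) is the number of partitions of $n$ into parts from $A$ in which each part occurs at most $\alpha$ times and having an even (resp. odd) number of parts, and $\bar{p}^{A}_{\alpha}(0)=1$. *)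

theory Defs
  imports Main "HOL-Library.Multiset"
begin

definition parts_from :: "nat set \<Rightarrow> nat \<Rightarrow> nat multiset set" where
  "parts_from A n = {M. (\<forall>x \<in># M. x > 0 \<and> x \<in> A) \<and> sum_mset M = n}"

definition parts_from_bounded :: "nat set \<Rightarrow> nat \<Rightarrow> nat \<Rightarrow> nat multiset set" where
  "parts_from_bounded A \<alpha> n = {M \<in> parts_from A n. \<forall>x. count M x \<le> \<alpha>}"

definition E_A :: "nat set \<Rightarrow> nat \<Rightarrow> nat" where
  "E_A A n = card {M \<in> parts_from A n. even (size M)}"
definition O_A :: "nat set \<Rightarrow> nat \<Rightarrow> nat" where
  "O_A A n = card {M \<in> parts_from A n. odd (size M)}"

definition pbar :: "nat set \<Rightarrow> nat \<Rightarrow> int" where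
  "pbar A n = (if n = 0 then 1 else int (E_A A n) - int (O_A A n))"

definition E_A_bd :: "nat set \<Rightarrow> nat \<Rightarrow> nat \<Rightarrow> nat" where
  "E_A_bd A \<alpha> n = card {M \<in> parts_from_bounded A \<alpha> n. even (size M)}"
definition O_A_bd :: "nat set \<Rightarrow> nat \<Rightarrow> nat \<Rightarrow> nat" where
  "O_A_bd A \<alpha> n = card {M \<in> parts_from_bounded A \<alpha> n. odd (size M)}"

definition pbar_bd :: "nat set \<Rightarrow> nat \<Rightarrow> nat \<Rightarrow> int" where
  "pbar_bd A \<alpha> n = (if n = 0 then 1 else int (E_A_bd A \<alpha> n) - int (O_A_bd A \<alpha> n))"

definition bin_seqs :: "nat \<Rightarrow> (nat \<Rightarrow> nat) set" where
  "bin_seqs n = {N. finite {i. N i \<noteq> 0} \<and> (\<Sum>i\<in>{i. N i \<noteq> 0}. 2 ^ i * N i) = n}"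

end

(* Both sides g(n) satisfy g(0) = 1 and the recursion
     g(n) = sum_{i <= n, n - i even} pbar^A(i) g((n - i)/2).
   For the right-hand side this comes from splitting off N_0. For the left-hand side
   it is the coefficient identity behind prod (1 - x^(2a)) = prod (1 - x^a) * prod (1 + x^a),
   since pbar^A_1 has generating function prod_a (1 - x^a) and pbar^A has
   generating function prod_a 1/(1 + x^a); for infinite A one first discards the
   parts larger than n. *)

theory Submission
  imports Defs "HOL-Computational_Algebra.Formal_Power_Series"
begin

lemma member_le_sum_mset: "x \<in># M \<Longrightarrow> x \<le> sum_mset (M :: nat multiset)"
  by (metis le_add1 multi_member_split sum_mset.add_mset)

lemma size_le_sum_mset: "(\<forall>x\<in>#M. x > 0) \<Longrightarrow> size M \<le> sum_mset (M :: nat multiset)"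
  by (induction M) auto

lemma finite_parts_from: "finite (parts_from A n)"
proof (rule finite_subset)
  show "parts_from A n \<subseteq> (\<Union>m\<le>n. multisets_of_size {1..n} m)"
    unfolding parts_from_def multisets_of_size_def
    using member_le_sum_mset size_le_sum_mset by (force simp: Suc_le_eq)
qed auto

lemma finite_parts_from_bounded: "finite (parts_from_bounded A \<alpha> n)"
  unfolding parts_from_bounded_def using finite_parts_from by simp

lemma parts_from_0: "parts_from A 0 = {{#}}"
  unfolding parts_from_def
  by auto (metis member_le_sum_mset multiset_nonemptyE le_zero_eq not_less0)

lemma parts_from_bounded_0: "parts_from_bounded A \<alpha> 0 = {{#}}"
  unfolding parts_from_bounded_def parts_from_0 by auto

lemma parts_from_empty: "parts_from {} n = (if n = 0 then {{#}} else {})"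
  by (auto simp: parts_from_0) (auto simp: parts_from_def)

lemma parts_from_Int_atMost: "m \<le> k \<Longrightarrow> parts_from (A \<inter> {..k}) m = parts_from A m"
  unfolding parts_from_def by (auto dest: member_le_sum_mset)

lemma parts_from_insert_containing:
  assumes "a > 0"
  shows "{M \<in> parts_from (insert a B) n. a \<in># M} =
    (if a \<le> n then add_mset a ` parts_from (insert a B) (n - a) else {})"
proof (cases "a \<le> n")
  case True
  have "M \<in> add_mset a ` parts_from (insert a B) (n - a)"
    if "M \<in> parts_from (insert a B) n" "a \<in># M" for M
  proof
    show "M = add_mset a (M - {#a#})" using that(2) by simp
    then show "M - {#a#} \<in> parts_from (insert a B) (n - a)"
      using that(1) unfolding parts_from_def
      by (auto dest: in_diffD) (metis add_diff_cancel_left' sum_mset.add_mset)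
  qed
  then show ?thesis using True assms by (auto simp: parts_from_def)
next
  case False
  then show ?thesis by (auto simp: parts_from_def dest: member_le_sum_mset)
qed

lemma parts_from_bounded_insert_containing:
  assumes "a > 0" "a \<notin> B"
  shows "{M \<in> parts_from_bounded (insert a B) 1 n. a \<in># M} =
    (if a \<le> n then add_mset a ` parts_from_bounded B 1 (n - a) else {})"
proof (cases "a \<le> n")
  case True
  have "M \<in> add_mset a ` parts_from_bounded B 1 (n - a)"
    if "M \<in> parts_from_bounded (insert a B) 1 n" "a \<in># M" for M
  proof
    show M: "M = add_mset a (M - {#a#})" using that(2) by simp
    have "count M a \<le> 1" "count M a > 0" using that by (auto simp: parts_from_bounded_def)
    then have "a \<notin># M - {#a#}" by (simp add: not_in_iff)
    then show "M - {#a#} \<in> parts_from_bounded B 1 (n - a)"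
      using that(1) M unfolding parts_from_bounded_def parts_from_def
      by (auto dest: in_diffD) (metis add_diff_cancel_left' sum_mset.add_mset)+
  qed
  moreover have "add_mset a M \<in> parts_from_bounded (insert a B) 1 n"
    if "M \<in> parts_from_bounded B 1 (n - a)" for M
  proof -
    have "a \<notin># M" using that assms(2) by (auto simp: parts_from_bounded_def parts_from_def)
    then show ?thesis
      using that True assms(1) by (auto simp: parts_from_bounded_def parts_from_def not_in_iff)
  qed
  ultimately show ?thesis using True by auto
next
  case False
  then show ?thesis
    by (auto simp: parts_from_bounded_def parts_from_def dest: member_le_sum_mset)
qed

definition signed_parts :: "nat set \<Rightarrow> nat \<Rightarrow> int" where
  "signed_parts A n = (\<Sum>M\<in>parts_from A n. (-1) ^ size M)"

definition signed_distinct_parts :: "nat set \<Rightarrow> nat \<Rightarrow> int" where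
  "signed_distinct_parts A n = (\<Sum>M\<in>parts_from_bounded A 1 n. (-1) ^ size M)"

lemma sum_sign_size_eq_card_diff:
  assumes "finite X"
  shows "(\<Sum>M\<in>X. (-1::int) ^ size M) =
    int (card {M\<in>X. even (size M)}) - int (card {M\<in>X. odd (size M)})"
proof -
  have "(\<Sum>M\<in>X. (-1::int) ^ size M) =
      (\<Sum>M\<in>{M\<in>X. even (size M)}. (-1) ^ size M) + (\<Sum>M\<in>{M\<in>X. odd (size M)}. (-1) ^ size M)"
    using assms by (subst sum.union_disjoint[symmetric]) (auto intro: sum.cong)
  then show ?thesis by simp
qed

lemma sum_sign_size_image_add_mset:
  "(\<Sum>M\<in>add_mset a ` X. (-1::int) ^ size M) = - (\<Sum>M\<in>X. (-1) ^ size M)"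
  by (subst sum.reindex) (auto simp: inj_on_def sum_negf)

lemma pbar_eq_signed_parts: "pbar A n = signed_parts A n"
  unfolding pbar_def signed_parts_def E_A_def O_A_def
  using sum_sign_size_eq_card_diff[OF finite_parts_from]
  by (cases "n = 0") (simp_all add: parts_from_0)

lemma pbar_bd_1_eq_signed_distinct_parts: "pbar_bd A 1 n = signed_distinct_parts A n"
  unfolding pbar_bd_def signed_distinct_parts_def E_A_bd_def O_A_bd_def
  using sum_sign_size_eq_card_diff[OF finite_parts_from_bounded]
  by (cases "n = 0") (simp_all add: parts_from_bounded_0)

lemma signed_parts_insert:
  assumes "a > 0" "a \<notin> B"
  shows "signed_parts (insert a B) n =
    signed_parts B n - (if a \<le> n then signed_parts (insert a B) (n - a) else 0)"
proof -
  let ?P = "parts_from (insert a B) n"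
  have "signed_parts (insert a B) n =
      (\<Sum>M\<in>?P \<inter> {M. a \<in># M}. (-1) ^ size M) + (\<Sum>M\<in>?P - {M. a \<in># M}. (-1) ^ size M)"
    unfolding signed_parts_def by (rule sum.Int_Diff[OF finite_parts_from])
  also have "?P \<inter> {M. a \<in># M} = {M \<in> ?P. a \<in># M}" by auto
  also have "?P - {M. a \<in># M} = parts_from B n"
    using assms(2) unfolding parts_from_def by auto
  finally show ?thesis
    unfolding parts_from_insert_containing[OF assms(1)] signed_parts_def
    by (simp add: sum_sign_size_image_add_mset)
qed

lemma signed_distinct_parts_insert:
  assumes "a > 0" "a \<notin> B"
  shows "signed_distinct_parts (insert a B) n =
    signed_distinct_parts B n - (if a \<le> n then signed_distinct_parts B (n - a) else 0)"
proof -
  let ?P = "parts_from_bounded (insert a B) 1 n"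
  have "signed_distinct_parts (insert a B) n =
      (\<Sum>M\<in>?P \<inter> {M. a \<in># M}. (-1) ^ size M) + (\<Sum>M\<in>?P - {M. a \<in># M}. (-1) ^ size M)"
    unfolding signed_distinct_parts_def by (rule sum.Int_Diff[OF finite_parts_from_bounded])
  also have "?P \<inter> {M. a \<in># M} = {M \<in> ?P. a \<in># M}" by auto
  also have "?P - {M. a \<in># M} = parts_from_bounded B 1 n"
    using assms(2) unfolding parts_from_bounded_def parts_from_def by auto
  finally show ?thesis
    unfolding parts_from_bounded_insert_containing[OF assms] signed_distinct_parts_def
    by (simp add: sum_sign_size_image_add_mset)
qed


lemma signed_parts_empty: "signed_parts {} n = (if n = 0 then 1 else 0)"
  unfolding signed_parts_def by (simp add: parts_from_empty)

lemma signed_distinct_parts_empty: "signed_distinct_parts {} n = (if n = 0 then 1 else 0)"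
  unfolding signed_distinct_parts_def
  by (cases "n = 0") (simp_all add: parts_from_bounded_0, simp add: parts_from_bounded_def parts_from_empty)

lemma signed_parts_Int_atMost: "m \<le> k \<Longrightarrow> signed_parts (A \<inter> {..k}) m = signed_parts A m"
  unfolding signed_parts_def by (simp add: parts_from_Int_atMost)

lemma signed_distinct_parts_Int_atMost:
  "m \<le> k \<Longrightarrow> signed_distinct_parts (A \<inter> {..k}) m = signed_distinct_parts A m"
  unfolding signed_distinct_parts_def parts_from_bounded_def by (simp add: parts_from_Int_atMost)

unbundle fps_syntax

lemma fps_nth_mult_one_plus_X_power:
  "((f :: 'a::comm_ring_1 fps) * (1 + fps_X ^ k)) $ n = f $ n + (if n < k then 0 else f $ (n - k))"
  by (simp add: distrib_left fps_X_power_mult_right_nth)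

lemma fps_nth_one_minus_X_power_mult:
  "((1 - fps_X ^ k) * (f :: 'a::comm_ring_1 fps)) $ n = f $ n - (if n < k then 0 else f $ (n - k))"
  by (simp add: left_diff_distrib fps_X_power_mult_nth)

lemma signed_parts_fps:
  assumes "finite B" "\<forall>b\<in>B. b > 0"
  shows "Abs_fps (signed_parts B) * (\<Prod>a\<in>B. 1 + fps_X ^ a) = (1 :: int fps)"
  using assms
proof (induction B rule: finite_induct)
  case empty
  show ?case by (rule fps_ext) (simp add: signed_parts_empty)
next
  case (insert a B)
  have "Abs_fps (signed_parts (insert a B)) * (1 + fps_X ^ a) = Abs_fps (signed_parts B)"
    by (rule fps_ext)
      (use signed_parts_insert insert in \<open>auto simp: fps_nth_mult_one_plus_X_power\<close>)
  with insert show ?case by (simp add: mult.assoc[symmetric])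
qed

text \<open>The dilation by \<open>c\<close> yields both \<open>\<Prod>(1 - X^a)\<close> and \<open>\<Prod>(1 - X^(2a))\<close>.\<close>

lemma signed_distinct_parts_fps:
  assumes "finite B" "\<forall>b\<in>B. b > 0" "c > 0"
  shows "Abs_fps (\<lambda>n. if c dvd n then signed_distinct_parts B (n div c) else 0) =
    (\<Prod>a\<in>B. 1 - fps_X ^ (c * a) :: int fps)"
  using assms
proof (induction B rule: finite_induct)
  case empty
  show ?case
    by (rule fps_ext) (use \<open>c > 0\<close> in \<open>auto simp: signed_distinct_parts_empty elim!: dvdE\<close>)
next
  case (insert a B)
  let ?H = "\<lambda>B. Abs_fps (\<lambda>n. if c dvd n then signed_distinct_parts B (n div c) else 0) :: int fps"
  have "?H (insert a B) $ n = ((1 - fps_X ^ (c * a)) * ?H B) $ n" for n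
  proof (cases "c dvd n")
    case True
    then obtain m where m: "n = c * m" ..
    have "n < c * a \<longleftrightarrow> m < a" "n - c * a = c * (m - a)"
      using m \<open>c > 0\<close> by (simp_all add: right_diff_distrib')
    then show ?thesis
      using signed_distinct_parts_insert[of a B m] insert.hyps insert.prems m
      by (auto simp: fps_nth_one_minus_X_power_mult)
  next
    case False
    then have "\<not> (c * a \<le> n \<and> c dvd (n - c * a))"
      by (metis dvd_add dvd_triv_left le_add_diff_inverse2)
    with False show ?thesis by (auto simp: fps_nth_one_minus_X_power_mult)
  qed
  with insert show ?case by (simp add: fps_ext)
qed

lemma signed_distinct_parts_convolution_finite:
  assumes "finite B" "\<forall>b\<in>B. b > 0"
  shows "signed_distinct_parts B n = (\<Sum>i=0..n.
    signed_parts B i * (if even (n - i) then signed_distinct_parts B ((n - i) div 2) else 0))"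
proof -
  let ?S = "Abs_fps (signed_parts B)"
  let ?T = "Abs_fps (signed_distinct_parts B)"
  let ?T2 = "Abs_fps (\<lambda>n. if 2 dvd n then signed_distinct_parts B (n div 2) else 0)"
  have "?T = (\<Prod>a\<in>B. 1 - fps_X ^ a)"
    using signed_distinct_parts_fps[OF assms, of 1] by simp
  moreover have "?T2 = (\<Prod>a\<in>B. (1 - fps_X ^ a) * (1 + fps_X ^ a))"
    by (simp add: signed_distinct_parts_fps[OF assms] power_mult algebra_simps power2_eq_square)
  ultimately have "?T2 = ?T * (\<Prod>a\<in>B. 1 + fps_X ^ a)"
    by (simp add: prod.distrib)
  then have "?S * ?T2 = ?T"
    using signed_parts_fps[OF assms] by (simp add: algebra_simps)
  then have "?T $ n = (?S * ?T2) $ n" by simp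
  then show ?thesis by (simp add: fps_mult_nth)
qed

lemma signed_distinct_parts_convolution:
  assumes "\<forall>b\<in>A. b > 0"
  shows "signed_distinct_parts A n = (\<Sum>i=0..n.
    signed_parts A i * (if even (n - i) then signed_distinct_parts A ((n - i) div 2) else 0))"
proof -
  let ?B = "A \<inter> {..n}"
  have "signed_distinct_parts A n = signed_distinct_parts ?B n"
    by (simp add: signed_distinct_parts_Int_atMost)
  also have "\<dots> = (\<Sum>i=0..n.
      signed_parts ?B i * (if even (n - i) then signed_distinct_parts ?B ((n - i) div 2) else 0))"
    by (rule signed_distinct_parts_convolution_finite) (use assms in auto)
  also have "\<dots> = (\<Sum>i=0..n.
      signed_parts A i * (if even (n - i) then signed_distinct_parts A ((n - i) div 2) else 0))"
    by (intro sum.cong refl)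
      (simp add: signed_parts_Int_atMost signed_distinct_parts_Int_atMost)
  finally show ?thesis .
qed

lemma support_case_nat: "{j. case_nat i M j \<noteq> 0} \<subseteq> insert 0 (Suc ` {j. M j \<noteq> 0})"
proof
  fix j assume "j \<in> {j. case_nat i M j \<noteq> 0}"
  then show "j \<in> insert 0 (Suc ` {j. M j \<noteq> 0})" by (cases j) auto
qed

lemma finite_support_case_nat_iff:
  "finite {j. case_nat i M j \<noteq> 0} \<longleftrightarrow> finite {j. M j \<noteq> 0}"
proof
  assume "finite {j. case_nat i M j \<noteq> 0}"
  then have "finite (Suc -` {j. case_nat i M j \<noteq> 0})" by (rule finite_vimageI) simp
  then show "finite {j. M j \<noteq> 0}" by (simp add: vimage_def)
next
  assume "finite {j. M j \<noteq> 0}"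
  then show "finite {j. case_nat i M j \<noteq> 0}" by (intro finite_subset[OF support_case_nat]) simp
qed

lemma binary_weight_case_nat:
  assumes "finite {j. M j \<noteq> 0}"
  shows "(\<Sum>j\<in>{j. case_nat i M j \<noteq> 0}. 2 ^ j * case_nat i M j) =
    i + 2 * (\<Sum>j\<in>{j. M j \<noteq> 0}. 2 ^ j * M j :: nat)"
proof -
  let ?S = "{j. M j \<noteq> 0}"
  have "(\<Sum>j\<in>{j. case_nat i M j \<noteq> 0}. 2 ^ j * case_nat i M j) =
      (\<Sum>j\<in>insert 0 (Suc ` ?S). 2 ^ j * case_nat i M j)"
    by (rule sum.mono_neutral_left) (use assms support_case_nat in auto)
  also have "\<dots> = i + (\<Sum>j\<in>?S. 2 ^ Suc j * M j)"
    using assms by (simp add: sum.reindex)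
  finally show ?thesis by (simp add: sum_distrib_left mult.assoc)
qed

lemma prod_support_case_nat:
  assumes "finite {j. M j \<noteq> 0}" "f 0 = 1"
  shows "(\<Prod>j\<in>{j. case_nat i M j \<noteq> 0}. f (case_nat i M j)) =
    f i * (\<Prod>j\<in>{j. M j \<noteq> (0::nat)}. f (M j))"
proof -
  let ?S = "{j. M j \<noteq> 0}"
  have "(\<Prod>j\<in>{j. case_nat i M j \<noteq> 0}. f (case_nat i M j)) =
      (\<Prod>j\<in>insert 0 (Suc ` ?S). f (case_nat i M j))"
    by (rule prod.mono_neutral_left) (use assms support_case_nat in auto)
  also have "\<dots> = f i * (\<Prod>j\<in>?S. f (M j))"
    using assms by (simp add: prod.reindex)
  finally show ?thesis .
qed

lemma bin_seqs_eq_image_case_nat: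
  "bin_seqs n = (\<lambda>(i, M). case_nat i M) `
    (SIGMA i:{i. i \<le> n \<and> even (n - i)}. bin_seqs ((n - i) div 2))"
proof (rule set_eqI, rule iffI)
  fix N assume N: "N \<in> bin_seqs n"
  let ?M = "\<lambda>j. N (Suc j)"
  have N_eq: "N = case_nat (N 0) ?M" by (rule ext) (simp split: nat.splits)
  then have "finite {j. ?M j \<noteq> 0}"
    using N finite_support_case_nat_iff[of "N 0" ?M] unfolding bin_seqs_def by simp
  moreover from this have "n = N 0 + 2 * (\<Sum>j\<in>{j. ?M j \<noteq> 0}. 2 ^ j * ?M j)"
    using N binary_weight_case_nat[of ?M "N 0"] N_eq unfolding bin_seqs_def by simp
  ultimately have "(N 0, ?M) \<in> (SIGMA i:{i. i \<le> n \<and> even (n - i)}. bin_seqs ((n - i) div 2))"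
    unfolding bin_seqs_def by auto
  then show "N \<in> (\<lambda>(i, M). case_nat i M) `
      (SIGMA i:{i. i \<le> n \<and> even (n - i)}. bin_seqs ((n - i) div 2))"
    by (rule image_eqI[rotated]) (use N_eq in simp)
next
  fix N assume "N \<in> (\<lambda>(i, M). case_nat i M) `
    (SIGMA i:{i. i \<le> n \<and> even (n - i)}. bin_seqs ((n - i) div 2))"
  then obtain i M where "N = case_nat i M" "i \<le> n" "even (n - i)" "M \<in> bin_seqs ((n - i) div 2)"
    by auto
  then show "N \<in> bin_seqs n"
    using binary_weight_case_nat[of M i] finite_support_case_nat_iff[of i M]
    unfolding bin_seqs_def by auto
qed

lemma inj_on_case_nat: "inj_on (\<lambda>(i, M). case_nat i M) X"
  by (rule inj_onI) (auto simp: fun_eq_iff split: nat.splits)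

lemma bin_seqs_0: "bin_seqs 0 = {\<lambda>_. 0}"
  unfolding bin_seqs_def by (auto simp: fun_eq_iff)

lemma finite_bin_seqs: "finite (bin_seqs n)"
proof (induction n rule: less_induct)
  case (less n)
  show ?case
  proof (cases "n = 0")
    case True
    then show ?thesis by (simp add: bin_seqs_0)
  next
    case False
    then have "finite (SIGMA i:{i. i \<le> n \<and> even (n - i)}. bin_seqs ((n - i) div 2))"
      using less by (intro finite_SigmaI) auto
    then show ?thesis by (subst bin_seqs_eq_image_case_nat) simp
  qed
qed

definition bin_seqs_prod_sum :: "(nat \<Rightarrow> 'a::comm_ring_1) \<Rightarrow> nat \<Rightarrow> 'a" where
  "bin_seqs_prod_sum f n = (\<Sum>N\<in>bin_seqs n. \<Prod>j\<in>{j. N j \<noteq> 0}. f (N j))"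

lemma bin_seqs_prod_sum_rec:
  assumes "f 0 = 1"
  shows "bin_seqs_prod_sum f n =
    (\<Sum>i=0..n. f i * (if even (n - i) then bin_seqs_prod_sum f ((n - i) div 2) else 0))"
proof -
  let ?I = "{i. i \<le> n \<and> even (n - i)}"
  let ?P = "\<lambda>N. \<Prod>j\<in>{j. N j \<noteq> 0}. f (N j)"
  have "bin_seqs_prod_sum f n = (\<Sum>(i, M)\<in>(SIGMA i:?I. bin_seqs ((n - i) div 2)). ?P (case_nat i M))"
    unfolding bin_seqs_prod_sum_def bin_seqs_eq_image_case_nat[of n]
    by (subst sum.reindex[OF inj_on_case_nat]) (simp add: case_prod_unfold)
  also have "\<dots> = (\<Sum>(i, M)\<in>(SIGMA i:?I. bin_seqs ((n - i) div 2)). f i * ?P M)"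
  proof (intro sum.cong refl, clarify)
    fix i M assume "M \<in> bin_seqs ((n - i) div 2)"
    then show "?P (case_nat i M) = f i * ?P M"
      by (intro prod_support_case_nat assms) (simp add: bin_seqs_def)
  qed
  also have "\<dots> = (\<Sum>i\<in>?I. f i * bin_seqs_prod_sum f ((n - i) div 2))"
    by (subst sum.Sigma[symmetric]) (auto simp: finite_bin_seqs bin_seqs_prod_sum_def sum_distrib_left)
  also have "\<dots> = (\<Sum>i=0..n. if even (n - i) then f i * bin_seqs_prod_sum f ((n - i) div 2) else 0)"
    by (subst sum.inter_filter[symmetric]) (auto intro: sum.cong)
  also have "\<dots> = (\<Sum>i=0..n. f i * (if even (n - i) then bin_seqs_prod_sum f ((n - i) div 2) else 0))"
    by (intro sum.cong) auto
  finally show ?thesis .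
qed


lemma halving_recursion_unique:
  fixes f g h :: "nat \<Rightarrow> 'a::comm_ring_1"
  assumes "g 0 = h 0"
    and "\<And>n. g n = (\<Sum>i=0..n. f i * (if even (n - i) then g ((n - i) div 2) else 0))"
    and "\<And>n. h n = (\<Sum>i=0..n. f i * (if even (n - i) then h ((n - i) div 2) else 0))"
  shows "g n = h n"
proof (induction n rule: less_induct)
  case (less n)
  show ?case
  proof (cases "n = 0")
    case False
    then have "(n - i) div 2 < n" for i by simp
    then show ?thesis using less by (subst assms(2), subst assms(3)) (intro sum.cong refl, simp)
  qed (simp add: assms(1))
qed

theorem mainTheorem4:
  fixes \<psi> :: "nat \<Rightarrow> nat" and A :: "nat set" and n :: nat
  assumes "inj_on \<psi> {1..}"
    and "\<forall>k\<ge>1. \<psi> k \<ge> 1"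
    and "A = \<psi> ` {1..}"
  shows "pbar_bd A 1 n = (\<Sum>N\<in>bin_seqs n. \<Prod>j\<in>{j. N j \<noteq> 0}. pbar A (N j))"
proof -
  have pos: "\<forall>b\<in>A. b > 0" using assms(2,3) by force
  have "pbar_bd A 1 n = signed_distinct_parts A n"
    by (rule pbar_bd_1_eq_signed_distinct_parts)
  also have "\<dots> = bin_seqs_prod_sum (pbar A) n"
  proof (rule halving_recursion_unique)
    show "signed_distinct_parts A 0 = bin_seqs_prod_sum (pbar A) 0"
      by (simp add: signed_distinct_parts_def parts_from_bounded_0 bin_seqs_prod_sum_def bin_seqs_0)
    show "signed_distinct_parts A m = (\<Sum>i=0..m. pbar A i *
        (if even (m - i) then signed_distinct_parts A ((m - i) div 2) else 0))" for m
      using signed_distinct_parts_convolution[OF pos] by (simp add: pbar_eq_signed_parts)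
    show "bin_seqs_prod_sum (pbar A) m = (\<Sum>i=0..m. pbar A i *
        (if even (m - i) then bin_seqs_prod_sum (pbar A) ((m - i) div 2) else 0))" for m
      by (rule bin_seqs_prod_sum_rec) (simp add: pbar_def)
  qed
  finally show ?thesis unfolding bin_seqs_prod_sum_def .
qed

end
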